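(* Let $\{1,\mu_1,\mu_2,\mu_3\}$ be a quaternion basis ($\mu_1,\mu_2$ orthogonal pure unit quaternions, $\mu_3=\mu_1\mu_2$), and let $q=z_1+z_2\mu_2$ with $z_1,z_2$ random variables in $\mathbb{C}_{\mu_1}$ be a centered quaternion Gaussian random variable which is $(1,\mu_1)$-proper, i.e. $q\stackrel{d}{=}q\mu_1$. Let ${\bf q}_{\mathbb{C}}=[z_1,z_1^{\star},z_2,z_2^{\star}]^T$. Then $$\mathbb{E}[{\bf q}_{\mathbb{C}}{\bf q}_{\mathbb{C}}^{\dagger}]=\begin{bmatrix}\sigma^2 & 0 & 0 & \omega\\ 0 & \sigma^2 & \omega^{\star} & 0\\ 0 & \omega & \varsigma^2 & 0\\ \omega^{\star} & 0 & 0 & \varsigma^2\end{bmatrix},$$ where $\sigma^2=\mathbb{E}[|z_1|^2]\in\mathbb{R}$, $\varsigma^2=\mathbb{E}[|z_2|^2]\in\mathbb{R}$ and $\omega=\mathbb{E}[z_1z_2]\in\mathbb{C}_{\mu_1}$.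
   Context: $\mathbb{H}$ denotes the quaternions; $\mathbb{C}_{\mu_1}=\mathbb{R}\oplus\mu_1\mathbb{R}$ is the commutative subfield isomorphic to $\mathbb{C}$; $^{\star}$ denotes conjugation and $\dagger$ conjugate transpose. A quaternion Gaussian random variable is one whose four real components are jointly Gaussian; centered means $\mathbb{E}[q]=0$. $\stackrel{d}{=}$ denotes equality in distribution. *)

theory Defs
  imports "HOL-Probability.Probability"
begin

text \<open>Quaternions are modelled as real^4 with components (re, i, j, k) = ($1,$2,$3,$4);
  the Euclidean norm / inner product of real^4 are the quaternion modulus / inner product.\<close>

type_synonym quat = "real ^ 4"

definition quat :: "real \<Rightarrow> real \<Rightarrow> real \<Rightarrow> real \<Rightarrow> quat" where
  "quat a b c d = vector [a, b, c, d]"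

definition qre :: "quat \<Rightarrow> real" where "qre p = p $ 1"
definition qi :: "quat \<Rightarrow> real" where "qi p = p $ 2"
definition qj :: "quat \<Rightarrow> real" where "qj p = p $ 3"
definition qk :: "quat \<Rightarrow> real" where "qk p = p $ 4"

definition qone :: quat where "qone = quat 1 0 0 0"

definition qmul :: "quat \<Rightarrow> quat \<Rightarrow> quat" where
  "qmul p q = quat
     (qre p * qre q - qi p * qi q - qj p * qj q - qk p * qk q)
     (qre p * qi q + qi p * qre q + qj p * qk q - qk p * qj q)
     (qre p * qj q - qi p * qk q + qj p * qre q + qk p * qi q)
     (qre p * qk q + qi p * qj q - qj p * qi q + qk p * qre q)"

definition qcnj :: "quat \<Rightarrow> quat" where
  "qcnj p = quat (qre p) (- qi p) (- qj p) (- qk p)"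

definition pure_unit :: "quat \<Rightarrow> bool" where
  "pure_unit \<mu> \<longleftrightarrow> qre \<mu> = 0 \<and> norm \<mu> = 1"

definition Cmu :: "quat \<Rightarrow> quat set" where
  "Cmu \<mu> = {a *\<^sub>R qone + b *\<^sub>R \<mu> | a b. True}"

text \<open>Real Gaussian random variable (degenerate/constant laws allowed).\<close>
definition real_gaussian :: "'a measure \<Rightarrow> ('a \<Rightarrow> real) \<Rightarrow> bool" where
  "real_gaussian M X \<longleftrightarrow> X \<in> borel_measurable M \<and>
     ((\<exists>c. distr M borel X = return borel c) \<or>
      (\<exists>m s. s > 0 \<and> distributed M lborel X (normal_density m s)))"

text \<open>Quaternion Gaussian: the four real components are jointly Gaussian, i.e.
  every real linear combination of them is a real Gaussian random variable.\<close>
definition quat_gaussian :: "'a measure \<Rightarrow> ('a \<Rightarrow> quat) \<Rightarrow> bool" where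
  "quat_gaussian M q \<longleftrightarrow> q \<in> borel_measurable M \<and>
     (\<forall>a::real^4. real_gaussian M (\<lambda>x. a \<bullet> q x))"

end

theory Submission
  imports Defs
begin

text \<open>
  Right multiplication by \<open>\<mu>1\<close> maps \<open>q = z1 + z2 \<mu>2\<close> to \<open>(\<mu>1 z1) + (-\<mu>1 z2) \<mu>2\<close>, so
  properness says that \<open>(z1, z2)\<close> and \<open>(\<mu>1 z1, -\<mu>1 z2)\<close> have the same law. Since \<open>\<mu>1\<^sup>2 = -1\<close>
  in the commutative field \<open>\<complex>\<^sub>\<mu>\<^sub>1\<close>, the products \<open>z1\<^sup>2\<close>, \<open>z2\<^sup>2\<close> and \<open>z1 z2\<^sup>\<star>\<close> change sign
  under this substitution, hence have expectation zero. Every other entry of the matrix is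
  \<open>|z1|\<^sup>2\<close>, \<open>|z2|\<^sup>2\<close>, \<open>z1 z2\<close>, or the conjugate of one of these vanishing moments.
\<close>

section \<open>Quaternion algebra\<close>

lemma vector_4 [simp]:
  "(vector [a, b, c, d] :: 'a::zero ^ 4) $ 1 = a" "(vector [a, b, c, d] :: 'a ^ 4) $ 2 = b"
  "(vector [a, b, c, d] :: 'a ^ 4) $ 3 = c" "(vector [a, b, c, d] :: 'a ^ 4) $ 4 = d"
  by (simp_all add: vector_def)

lemma quat_nth [simp]:
  "quat a b c d $ 1 = a" "quat a b c d $ 2 = b" "quat a b c d $ 3 = c" "quat a b c d $ 4 = d"
  by (simp_all add: quat_def)

lemma quat_eq_iff: "p = r \<longleftrightarrow> p $ 1 = r $ 1 \<and> p $ 2 = r $ 2 \<and> p $ 3 = r $ 3 \<and> p $ 4 = (r :: quat) $ 4"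
  by (simp add: vec_eq_iff forall_4)

lemma inner_quat: "(p :: quat) \<bullet> r = p $ 1 * r $ 1 + p $ 2 * r $ 2 + p $ 3 * r $ 3 + p $ 4 * r $ 4"
  by (simp add: inner_vec_def sum_4)

lemmas quat_parts = qre_def qi_def qj_def qk_def

lemma inner_qmul_right: "qmul p w \<bullet> qmul r w = (w \<bullet> w) * (p \<bullet> r)"
  unfolding inner_quat qmul_def quat_parts quat_nth by algebra

lemma inner_qmul_left: "qmul w p \<bullet> qmul w r = (w \<bullet> w) * (p \<bullet> r)"
  unfolding inner_quat qmul_def quat_parts quat_nth by algebra

lemma qmul_assoc: "qmul (qmul p r) s = qmul p (qmul r s)"
  unfolding quat_eq_iff qmul_def quat_parts quat_nth by algebra

lemma norm_qmul: "norm (qmul p r) = norm p * norm r"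
proof -
  have "norm (qmul p r) ^ 2 = (norm p * norm r) ^ 2"
    by (simp add: power2_norm_eq_inner inner_qmul_right power_mult_distrib)
  then show ?thesis by (simp add: power2_eq_iff_nonneg)
qed

lemma bounded_bilinear_qmul: "bounded_bilinear qmul"
proof (rule bounded_bilinear.intro)
  show "\<exists>K. \<forall>p r. norm (qmul p r) \<le> norm p * norm r * K"
    by (rule exI[of _ 1]) (simp add: norm_qmul)
qed (simp_all add: quat_eq_iff qmul_def quat_parts algebra_simps)

interpretation qmul: bounded_bilinear qmul
  by (rule bounded_bilinear_qmul)

lemma qmul_one_left [simp]: "qmul qone p = p"
  and qmul_one_right [simp]: "qmul p qone = p"
  by (simp_all add: quat_eq_iff qmul_def quat_parts qone_def)

lemma qcnj_qcnj [simp]: "qcnj (qcnj p) = p"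
  by (simp add: quat_eq_iff qcnj_def quat_parts)

lemma norm_qcnj [simp]: "norm (qcnj p) = norm p"
  by (simp add: norm_eq_sqrt_inner inner_quat qcnj_def quat_parts)

lemma bounded_linear_qcnj: "bounded_linear qcnj"
proof (rule bounded_linear_intro[where K = 1])
  show "norm (qcnj p) \<le> norm p * 1" for p by simp
qed (simp_all add: quat_eq_iff qcnj_def quat_parts)

lemma qcnj_zero [simp]: "qcnj 0 = 0"
  by (simp add: quat_eq_iff qcnj_def quat_parts)

lemma qcnj_qmul: "qcnj (qmul p r) = qmul (qcnj r) (qcnj p)"
  by (simp add: quat_eq_iff qcnj_def qmul_def quat_parts algebra_simps)

lemma qmul_qcnj_qcnj: "qmul (qcnj p) (qcnj r) = qcnj (qmul r p)"
  by (simp add: qcnj_qmul)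

lemma qmul_qcnj_self: "qmul p (qcnj p) = (norm p)\<^sup>2 *\<^sub>R qone"
  and qmul_qcnj_self': "qmul (qcnj p) p = (norm p)\<^sup>2 *\<^sub>R qone"
  by (simp_all add: quat_eq_iff qcnj_def qmul_def quat_parts qone_def power2_norm_eq_inner
      inner_quat algebra_simps)

lemma qre_qmul_pure: "qre p = 0 \<Longrightarrow> qre r = 0 \<Longrightarrow> qre (qmul p r) = - (p \<bullet> r)"
  by (simp add: qmul_def inner_quat quat_parts)

lemma qmul_pure_anticommute:
  assumes "qre p = 0" "qre r = 0" "p \<bullet> r = 0"
  shows "qmul r p = - qmul p r"
  using assms by (simp add: quat_eq_iff qmul_def quat_parts inner_quat algebra_simps)

lemma pure_unitD:
  assumes "pure_unit \<mu>" shows "qre \<mu> = 0" "\<mu> \<bullet> \<mu> = 1"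
  using assms by (simp_all add: pure_unit_def flip: power2_norm_eq_inner)

lemma qmul_pure_unit_self: "pure_unit \<mu> \<Longrightarrow> qmul \<mu> \<mu> = - qone"
  using qre_qmul_pure[of \<mu> \<mu>] pure_unitD[of \<mu>]
  by (simp add: quat_eq_iff qmul_def quat_parts qone_def)

lemma inner_qone: "qone \<bullet> p = qre p"
  by (simp add: inner_quat qone_def quat_parts)

lemma qre_qone [simp]: "qre qone = 1"
  by (simp add: qone_def quat_parts)

section \<open>The commutative subfield \<open>\<complex>\<^sub>\<mu>\<close>\<close>

definition cmu :: "quat \<Rightarrow> real \<Rightarrow> real \<Rightarrow> quat" where
  "cmu \<mu> a b = a *\<^sub>R qone + b *\<^sub>R \<mu>"

lemma Cmu_iff: "z \<in> Cmu \<mu> \<longleftrightarrow> (\<exists>a b. z = cmu \<mu> a b)"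
  by (auto simp: Cmu_def cmu_def)

lemma cmu_eq_iff:
  assumes "pure_unit \<mu>"
  shows "cmu \<mu> a b = cmu \<mu> c d \<longleftrightarrow> a = c \<and> b = d"
proof
  assume "cmu \<mu> a b = cmu \<mu> c d"
  then have "qone \<bullet> cmu \<mu> a b = qone \<bullet> cmu \<mu> c d" "\<mu> \<bullet> cmu \<mu> a b = \<mu> \<bullet> cmu \<mu> c d"
    by simp_all
  then show "a = c \<and> b = d"
    using pure_unitD[OF assms]
    by (simp add: cmu_def inner_add_right inner_qone inner_commute[of \<mu> qone])
qed simp

lemma uminus_cmu: "- cmu \<mu> a b = cmu \<mu> (- a) (- b)"
  by (simp add: cmu_def)

lemma qmul_cmu:
  assumes "pure_unit \<mu>"
  shows "qmul (cmu \<mu> a b) (cmu \<mu> c d) = cmu \<mu> (a * c - b * d) (a * d + b * c)"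
  by (simp add: cmu_def qmul.add_left qmul.add_right qmul.scaleR_left qmul.scaleR_right
      qmul_pure_unit_self[OF assms] algebra_simps)

lemma qcnj_cmu: "qre \<mu> = 0 \<Longrightarrow> qcnj (cmu \<mu> a b) = cmu \<mu> a (- b)"
  by (simp add: quat_eq_iff cmu_def qcnj_def quat_parts qone_def)

lemma norm_cmu:
  assumes "pure_unit \<mu>"
  shows "(norm (cmu \<mu> a b))\<^sup>2 = a\<^sup>2 + b\<^sup>2"
  using pure_unitD[OF assms] unfolding power2_norm_eq_inner
  by (simp add: cmu_def inner_add_left inner_add_right inner_qone
      inner_commute[of \<mu> qone] power2_eq_square)

lemma Cmu_qmul_commute: "z \<in> Cmu \<mu> \<Longrightarrow> w \<in> Cmu \<mu> \<Longrightarrow> qmul z w = qmul w z"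
  by (auto simp: Cmu_iff cmu_def qmul.add_left qmul.add_right qmul.scaleR_left qmul.scaleR_right
      algebra_simps)

lemma qcnj_in_Cmu: "qre \<mu> = 0 \<Longrightarrow> z \<in> Cmu \<mu> \<Longrightarrow> qcnj z \<in> Cmu \<mu>"
  by (metis Cmu_iff qcnj_cmu)

locale quat_basis =
  fixes \<mu>1 \<mu>2 :: quat
  assumes pure_unit_\<mu>1: "pure_unit \<mu>1" and pure_unit_\<mu>2: "pure_unit \<mu>2"
    and orthogonal_\<mu>1_\<mu>2: "\<mu>1 \<bullet> \<mu>2 = 0"
begin

abbreviation \<mu>3 :: quat where "\<mu>3 \<equiv> qmul \<mu>1 \<mu>2"

lemma basis_inner [simp]:
  "qone \<bullet> qone = 1" "\<mu>1 \<bullet> \<mu>1 = 1" "\<mu>2 \<bullet> \<mu>2 = 1" "\<mu>3 \<bullet> \<mu>3 = 1"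
  "qone \<bullet> \<mu>1 = 0" "qone \<bullet> \<mu>2 = 0" "qone \<bullet> \<mu>3 = 0"
  "\<mu>1 \<bullet> \<mu>2 = 0" "\<mu>1 \<bullet> \<mu>3 = 0" "\<mu>2 \<bullet> \<mu>3 = 0"
proof -
  note \<mu>1 = pure_unitD[OF pure_unit_\<mu>1] and \<mu>2 = pure_unitD[OF pure_unit_\<mu>2]
  show "qone \<bullet> qone = 1" by (simp add: inner_qone)
  show "\<mu>1 \<bullet> \<mu>1 = 1" "\<mu>2 \<bullet> \<mu>2 = 1" "\<mu>1 \<bullet> \<mu>2 = 0" by (fact \<mu>1 \<mu>2 orthogonal_\<mu>1_\<mu>2)+
  show "\<mu>3 \<bullet> \<mu>3 = 1" by (simp add: inner_qmul_left \<mu>1 \<mu>2)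
  show "qone \<bullet> \<mu>1 = 0" "qone \<bullet> \<mu>2 = 0" "qone \<bullet> \<mu>3 = 0"
    by (simp_all add: inner_qone \<mu>1 \<mu>2 qre_qmul_pure orthogonal_\<mu>1_\<mu>2)
  show "\<mu>1 \<bullet> \<mu>3 = 0"
    using inner_qmul_left[of \<mu>1 qone \<mu>2] by (simp add: inner_qone \<mu>2)
  show "\<mu>2 \<bullet> \<mu>3 = 0"
    using inner_qmul_right[of qone \<mu>2 \<mu>1] by (simp add: inner_qone \<mu>1 inner_commute)
qed


lemma basis_inner_commuted [simp]:
  "\<mu>1 \<bullet> qone = 0" "\<mu>2 \<bullet> qone = 0" "\<mu>3 \<bullet> qone = 0"
  "\<mu>2 \<bullet> \<mu>1 = 0" "\<mu>3 \<bullet> \<mu>1 = 0" "\<mu>3 \<bullet> \<mu>2 = 0"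
  by (simp_all add: inner_commute)

lemma qmul_\<mu>2_\<mu>1: "qmul \<mu>2 \<mu>1 = - \<mu>3"
  using qmul_pure_anticommute pure_unitD pure_unit_\<mu>1 pure_unit_\<mu>2 orthogonal_\<mu>1_\<mu>2 by blast

lemma qmul_\<mu>3_\<mu>1: "qmul \<mu>3 \<mu>1 = \<mu>2"
proof -
  have "qmul \<mu>3 \<mu>1 = - qmul \<mu>1 \<mu>3"
    by (simp add: qmul_assoc qmul_\<mu>2_\<mu>1 qmul.minus_right)
  also have "\<dots> = - qmul (qmul \<mu>1 \<mu>1) \<mu>2"
    by (simp add: qmul_assoc)
  finally show ?thesis
    by (simp add: qmul_pure_unit_self pure_unit_\<mu>1 qmul.minus_left)
qed

lemma inner_qmul_\<mu>1:
  "qone \<bullet> qmul p \<mu>1 = - (\<mu>1 \<bullet> p)" "\<mu>1 \<bullet> qmul p \<mu>1 = qone \<bullet> p"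
  "\<mu>2 \<bullet> qmul p \<mu>1 = \<mu>3 \<bullet> p" "\<mu>3 \<bullet> qmul p \<mu>1 = - (\<mu>2 \<bullet> p)"
proof -
  have "qone = qmul (- \<mu>1) \<mu>1" "\<mu>1 = qmul qone \<mu>1" "\<mu>2 = qmul \<mu>3 \<mu>1" "\<mu>3 = qmul (- \<mu>2) \<mu>1"
    by (simp_all add: qmul.minus_left qmul_pure_unit_self pure_unit_\<mu>1 qmul_\<mu>3_\<mu>1 qmul_\<mu>2_\<mu>1)
  then show "qone \<bullet> qmul p \<mu>1 = - (\<mu>1 \<bullet> p)" "\<mu>1 \<bullet> qmul p \<mu>1 = qone \<bullet> p"
    "\<mu>2 \<bullet> qmul p \<mu>1 = \<mu>3 \<bullet> p" "\<mu>3 \<bullet> qmul p \<mu>1 = - (\<mu>2 \<bullet> p)"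
    by (metis inner_qmul_right basis_inner(2) mult_1 inner_minus_left)+
qed


text \<open>The Cayley--Dickson components \<open>z, w \<in> \<complex>\<^sub>\<mu>\<^sub>1\<close> of \<open>p = z + w \<mu>2\<close>.\<close>

definition cd_fst :: "quat \<Rightarrow> quat" where
  "cd_fst p = cmu \<mu>1 (qone \<bullet> p) (\<mu>1 \<bullet> p)"

definition cd_snd :: "quat \<Rightarrow> quat" where
  "cd_snd p = cmu \<mu>1 (\<mu>2 \<bullet> p) (\<mu>3 \<bullet> p)"

lemma cd_fst_snd_decomposition:
  assumes "z \<in> Cmu \<mu>1" "w \<in> Cmu \<mu>1"
  shows "cd_fst (z + qmul w \<mu>2) = z" "cd_snd (z + qmul w \<mu>2) = w"
proof -
  obtain a b c d where z: "z = cmu \<mu>1 a b" and w: "w = cmu \<mu>1 c d"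
    using assms by (auto simp: Cmu_iff)
  have "z + qmul w \<mu>2 = a *\<^sub>R qone + b *\<^sub>R \<mu>1 + c *\<^sub>R \<mu>2 + d *\<^sub>R \<mu>3"
    by (simp add: z w cmu_def qmul.add_left qmul.scaleR_left)
  then show "cd_fst (z + qmul w \<mu>2) = z" "cd_snd (z + qmul w \<mu>2) = w"
    by (simp_all add: z w cd_fst_def cd_snd_def inner_add_right)
qed

lemma borel_measurable_cd_fst [measurable]: "cd_fst \<in> borel_measurable borel"
  and borel_measurable_cd_snd [measurable]: "cd_snd \<in> borel_measurable borel"
  unfolding cd_fst_def[abs_def] cd_snd_def[abs_def] cmu_def by measurable

end

section \<open>Integration\<close>

lemma borel_measurable_qmul [measurable (raw)]:
  "f \<in> borel_measurable M \<Longrightarrow> g \<in> borel_measurable M \<Longrightarrow>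
    (\<lambda>x. qmul (f x) (g x)) \<in> borel_measurable M"
  by (rule borel_measurable_continuous_Pair)
    (auto intro!: qmul.continuous_on continuous_on_fst continuous_on_snd continuous_on_id)

lemma borel_measurable_qcnj [measurable (raw)]:
  "f \<in> borel_measurable M \<Longrightarrow> (\<lambda>x. qcnj (f x)) \<in> borel_measurable M"
  by (rule borel_measurable_continuous_on[OF linear_continuous_on[OF bounded_linear_qcnj]])

lemma integral_qcnj: "(\<integral>x. qcnj (f x) \<partial>M) = qcnj (integral\<^sup>L M f)"
  by (rule integral_bounded_linear'[OF bounded_linear_qcnj bounded_linear_qcnj]) simp

lemma integrable_qmul_if_square_integrable:
  assumes [measurable]: "f \<in> borel_measurable M" "g \<in> borel_measurable M"
    and "integrable M (\<lambda>x. (norm (f x))\<^sup>2)" "integrable M (\<lambda>x. (norm (g x))\<^sup>2)"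
  shows "integrable M (\<lambda>x. qmul (f x) (g x))"
proof (rule Bochner_Integration.integrable_bound)
  show "integrable M (\<lambda>x. (norm (f x))\<^sup>2 + (norm (g x))\<^sup>2)"
    using assms(3,4) by simp
  show "AE x in M. norm (qmul (f x) (g x)) \<le> norm ((norm (f x))\<^sup>2 + (norm (g x))\<^sup>2)"
  proof (rule AE_I2)
    fix x
    have "0 \<le> norm (f x) * norm (g x)"
      by simp
    moreover have "2 * (norm (f x) * norm (g x)) \<le> (norm (f x))\<^sup>2 + (norm (g x))\<^sup>2"
      using sum_squares_bound[of "norm (f x)" "norm (g x)"] by (simp add: mult.assoc)
    ultimately have "norm (f x) * norm (g x) \<le> (norm (f x))\<^sup>2 + (norm (g x))\<^sup>2"
      by linarith
    then show "norm (qmul (f x) (g x)) \<le> norm ((norm (f x))\<^sup>2 + (norm (g x))\<^sup>2)"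
      by (simp add: norm_qmul)
  qed
qed measurable

lemma integral_eq_0_if_odd_under_invariant_law:
  fixes G :: "'b::{banach, second_countable_topology} \<Rightarrow> 'c::{banach, second_countable_topology}"
  assumes [measurable]: "f \<in> borel_measurable M" "(\<lambda>x. T (f x)) \<in> borel_measurable M"
    "G \<in> borel_measurable borel"
    and invariant: "distr M borel f = distr M borel (\<lambda>x. T (f x))"
    and odd: "\<And>p. G (T p) = - G p"
  shows "(\<integral>x. G (f x) \<partial>M) = 0"
proof -
  have "(\<integral>x. G (f x) \<partial>M) = integral\<^sup>L (distr M borel f) G"
    by (simp add: integral_distr)
  also have "\<dots> = (\<integral>x. G (T (f x)) \<partial>M)"
    by (simp add: invariant integral_distr)
  also have "\<dots> = - (\<integral>x. G (f x) \<partial>M)"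
    by (simp add: odd)
  finally have "(\<integral>x. G (f x) \<partial>M) + (\<integral>x. G (f x) \<partial>M) = 0"
    by (simp add: eq_neg_iff_add_eq_0)
  then show ?thesis
    by (simp flip: scaleR_2)
qed

lemma real_gaussian_square_integrable:
  assumes "prob_space M" and "real_gaussian M X"
  shows "integrable M (\<lambda>x. (X x)\<^sup>2)"
proof -
  have [measurable]: "X \<in> borel_measurable M"
    using assms(2) by (simp add: real_gaussian_def)
  from assms(2) consider (degenerate) c where "distr M borel X = return borel c"
    | (normal) m s where "s > 0" "distributed M lborel X (normal_density m s)"
    unfolding real_gaussian_def by blast
  then show ?thesis
  proof cases
    case degenerate
    interpret prob_space "return borel c"
      by (rule prob_space_return) simp
    have "integrable (return borel c) (\<lambda>t::real. t\<^sup>2)"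
      by (rule integrable_const_bound[where B = "c\<^sup>2"]) (auto simp: AE_return)
    then have "integrable (distr M borel X) (\<lambda>t::real. t\<^sup>2)"
      using degenerate by simp
    then show ?thesis
      by (subst (asm) integrable_distr_eq) auto
  next
    case normal
    have "(\<lambda>t. normal_density m s t * t\<^sup>2) = (\<lambda>t. normal_density m s t * (t - m)\<^sup>2
        + 2 * m * (normal_density m s t * (t - m) ^ 1) + m\<^sup>2 * normal_density m s t)"
      by (auto simp: fun_eq_iff algebra_simps power2_eq_square)
    then have "integrable lborel (\<lambda>t. normal_density m s t * t\<^sup>2)"
      using normal(1)
      by (simp only:) (intro Bochner_Integration.integrable_add integrable_mult_right
          integrable_normal_moment integrable_normal_density; simp)
    then show ?thesis
      using distributed_integrable[OF normal(2), of "\<lambda>t. t\<^sup>2"] by simp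
  qed
qed

lemma integrable_vec_lambda:
  fixes f :: "'n::finite \<Rightarrow> 'a \<Rightarrow> 'b::euclidean_space"
  assumes "\<And>i. integrable M (f i)"
  shows "integrable M (\<lambda>x. \<chi> i. f i x)"
proof -
  have "(\<lambda>x. \<chi> i. f i x) = (\<lambda>x. \<Sum>i\<in>UNIV. axis i (f i x))"
    by (simp add: fun_eq_iff vec_eq_iff axis_def if_distrib)
  moreover have "bounded_linear (axis i :: 'b \<Rightarrow> 'b ^ 'n)" for i
  proof (rule bounded_linear_intro[where K = 1])
    show "norm (axis i v :: 'b ^ 'n) \<le> norm v * 1" for v
    proof -
      have "norm (axis i v :: 'b ^ 'n) \<le> (\<Sum>j\<in>UNIV. norm (axis i v $ j))"
        unfolding norm_vec_def by (rule L2_set_le_sum) simp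
      moreover have "norm (axis i v $ j) = (if j = i then norm v else 0)" for j
        by (simp add: axis_def)
      ultimately show ?thesis
        by simp
    qed
  qed (simp_all add: axis_def vec_eq_iff)
  ultimately show ?thesis
    using assms by (simp add: integrable_bounded_linear)
qed

lemma integral_vec_lambda:
  fixes f :: "'n::finite \<Rightarrow> 'a \<Rightarrow> 'b::euclidean_space"
  assumes "\<And>i. integrable M (f i)"
  shows "integral\<^sup>L M (\<lambda>x. \<chi> i. f i x) = (\<chi> i. integral\<^sup>L M (f i))"
proof -
  have "(\<integral>x. (\<chi> i. f i x) $ k \<partial>M) = integral\<^sup>L M (\<lambda>x. \<chi> i. f i x) $ k" for k
    by (rule integral_bounded_linear[OF bounded_linear_vec_nth integrable_vec_lambda[OF assms]])
  then show ?thesis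
    by (simp add: vec_eq_iff)
qed

section \<open>Second moments of a proper decomposition\<close>

locale proper_quat_decomposition = quat_basis \<mu>1 \<mu>2 + prob_space M
  for \<mu>1 \<mu>2 :: quat and M :: "'a measure" +
  fixes z1 z2 q :: "'a \<Rightarrow> quat"
  assumes z1_measurable [measurable]: "z1 \<in> borel_measurable M"
    and z2_measurable [measurable]: "z2 \<in> borel_measurable M"
    and q_measurable [measurable]: "q \<in> borel_measurable M"
    and z_in_Cmu: "\<And>x. x \<in> space M \<Longrightarrow> z1 x \<in> Cmu \<mu>1 \<and> z2 x \<in> Cmu \<mu>1"
    and q_decomposition: "\<And>x. x \<in> space M \<Longrightarrow> q x = z1 x + qmul (z2 x) \<mu>2"
    and square_integrable: "\<And>u. integrable M (\<lambda>x. (u \<bullet> q x)\<^sup>2)"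
    and proper: "distr M borel q = distr M borel (\<lambda>x. qmul (q x) \<mu>1)"
begin

lemma z1_eq: "x \<in> space M \<Longrightarrow> z1 x = cd_fst (q x)"
  and z2_eq: "x \<in> space M \<Longrightarrow> z2 x = cd_snd (q x)"
  using z_in_Cmu q_decomposition cd_fst_snd_decomposition by auto

lemma square_integrable_z1: "integrable M (\<lambda>x. (norm (z1 x))\<^sup>2)"
proof -
  have "integrable M (\<lambda>x. (norm (z1 x))\<^sup>2) \<longleftrightarrow> integrable M (\<lambda>x. (qone \<bullet> q x)\<^sup>2 + (\<mu>1 \<bullet> q x)\<^sup>2)"
    by (rule Bochner_Integration.integrable_cong)
      (simp_all add: z1_eq cd_fst_def norm_cmu pure_unit_\<mu>1)
  then show ?thesis
    using square_integrable by simp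
qed

lemma square_integrable_z2: "integrable M (\<lambda>x. (norm (z2 x))\<^sup>2)"
proof -
  have "integrable M (\<lambda>x. (norm (z2 x))\<^sup>2) \<longleftrightarrow> integrable M (\<lambda>x. (\<mu>2 \<bullet> q x)\<^sup>2 + (\<mu>3 \<bullet> q x)\<^sup>2)"
    by (rule Bochner_Integration.integrable_cong)
      (simp_all add: z2_eq cd_snd_def norm_cmu pure_unit_\<mu>1)
  then show ?thesis
    using square_integrable by simp
qed

lemma integrable_second_moment:
  assumes "f \<in> {z1, z2, \<lambda>x. qcnj (z1 x), \<lambda>x. qcnj (z2 x)}"
    and "g \<in> {z1, z2, \<lambda>x. qcnj (z1 x), \<lambda>x. qcnj (z2 x)}"
  shows "integrable M (\<lambda>x. qmul (f x) (g x))"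
  using assms square_integrable_z1 square_integrable_z2
  by (auto intro!: integrable_qmul_if_square_integrable)

lemma integral_eq_0_if_odd:
  fixes G :: "quat \<Rightarrow> quat"
  assumes "G \<in> borel_measurable borel" and "\<And>p. G (qmul p \<mu>1) = - G p"
  shows "(\<integral>x. G (q x) \<partial>M) = 0"
  by (rule integral_eq_0_if_odd_under_invariant_law[OF q_measurable _ assms(1) proper assms(2)])
    measurable

text \<open>Each integrand below changes sign under \<open>p \<mapsto> p \<mu>1\<close>, which preserves the law of \<open>q\<close>.\<close>

lemma vanishing_second_moments:
  "(\<integral>x. qmul (z1 x) (z1 x) \<partial>M) = 0" "(\<integral>x. qmul (z2 x) (z2 x) \<partial>M) = 0"
  "(\<integral>x. qmul (z1 x) (qcnj (z2 x)) \<partial>M) = 0"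
proof -
  have "(\<integral>x. qmul (cd_fst (q x)) (cd_fst (q x)) \<partial>M) = 0"
    by (rule integral_eq_0_if_odd)
      (measurable, simp add: cd_fst_def inner_qmul_\<mu>1 qmul_cmu pure_unit_\<mu>1 uminus_cmu cmu_eq_iff)
  moreover have "(\<integral>x. qmul (cd_snd (q x)) (cd_snd (q x)) \<partial>M) = 0"
    by (rule integral_eq_0_if_odd)
      (measurable, simp add: cd_snd_def inner_qmul_\<mu>1 qmul_cmu pure_unit_\<mu>1 uminus_cmu cmu_eq_iff)
  moreover have "(\<integral>x. qmul (cd_fst (q x)) (qcnj (cd_snd (q x))) \<partial>M) = 0"
    by (rule integral_eq_0_if_odd)
      (measurable, simp add: cd_fst_def cd_snd_def inner_qmul_\<mu>1 qmul_cmu qcnj_cmu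
        pure_unit_\<mu>1 pure_unitD uminus_cmu cmu_eq_iff)
  ultimately show "(\<integral>x. qmul (z1 x) (z1 x) \<partial>M) = 0" "(\<integral>x. qmul (z2 x) (z2 x) \<partial>M) = 0"
    "(\<integral>x. qmul (z1 x) (qcnj (z2 x)) \<partial>M) = 0"
    by (simp_all add: z1_eq z2_eq cong: Bochner_Integration.integral_cong)
qed

lemma integral_qmul_z2_z1: "(\<integral>x. qmul (z2 x) (z1 x) \<partial>M) = (\<integral>x. qmul (z1 x) (z2 x) \<partial>M)"
  by (rule Bochner_Integration.integral_cong) (auto intro: Cmu_qmul_commute dest: z_in_Cmu)

lemma vanishing_mixed_second_moments:
  "(\<integral>x. qmul (z2 x) (qcnj (z1 x)) \<partial>M) = 0" "(\<integral>x. qmul (qcnj (z1 x)) (z2 x) \<partial>M) = 0"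
  "(\<integral>x. qmul (qcnj (z2 x)) (z1 x) \<partial>M) = 0"
proof -
  have qcnj_z_in_Cmu: "qcnj (z1 x) \<in> Cmu \<mu>1" "qcnj (z2 x) \<in> Cmu \<mu>1" if "x \<in> space M" for x
    using z_in_Cmu[OF that] qcnj_in_Cmu pure_unitD(1)[OF pure_unit_\<mu>1] by auto
  have "qmul (z2 x) (qcnj (z1 x)) = qcnj (qmul (z1 x) (qcnj (z2 x)))" for x
    by (simp add: qcnj_qmul)
  then show z2_z1: "(\<integral>x. qmul (z2 x) (qcnj (z1 x)) \<partial>M) = 0"
    by (simp add: integral_qcnj vanishing_second_moments(3))
  have "(\<integral>x. qmul (qcnj (z1 x)) (z2 x) \<partial>M) = (\<integral>x. qmul (z2 x) (qcnj (z1 x)) \<partial>M)"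
    by (rule Bochner_Integration.integral_cong) 
      (auto intro: Cmu_qmul_commute qcnj_z_in_Cmu z_in_Cmu[THEN conjunct2])
  then show "(\<integral>x. qmul (qcnj (z1 x)) (z2 x) \<partial>M) = 0"
    using z2_z1 by simp
  have "(\<integral>x. qmul (qcnj (z2 x)) (z1 x) \<partial>M) = (\<integral>x. qmul (z1 x) (qcnj (z2 x)) \<partial>M)"
    by (rule Bochner_Integration.integral_cong) 
      (auto intro: Cmu_qmul_commute qcnj_z_in_Cmu z_in_Cmu[THEN conjunct1])
  then show "(\<integral>x. qmul (qcnj (z2 x)) (z1 x) \<partial>M) = 0"
    using vanishing_second_moments(3) by simp
qed

lemma second_moment_matrix:
  "integral\<^sup>L M (\<lambda>x. (\<chi> i j. qmul (vector [z1 x, qcnj (z1 x), z2 x, qcnj (z2 x)] $ i)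
        (qcnj (vector [z1 x, qcnj (z1 x), z2 x, qcnj (z2 x)] $ j))) :: quat ^ 4 ^ 4)
   = (let \<sigma>2 = (\<integral>x. (norm (z1 x))\<^sup>2 \<partial>M) *\<^sub>R qone;
          \<zeta>2 = (\<integral>x. (norm (z2 x))\<^sup>2 \<partial>M) *\<^sub>R qone;
          \<omega> = (\<integral>x. qmul (z1 x) (z2 x) \<partial>M)
      in vector [vector [\<sigma>2, 0, 0, \<omega>],
                 vector [0, \<sigma>2, qcnj \<omega>, 0],
                 vector [0, \<omega>, \<zeta>2, 0],
                 vector [qcnj \<omega>, 0, 0, \<zeta>2]])"
  (is "integral\<^sup>L M (\<lambda>x. \<chi> i j. ?E i j x) = ?rhs")
proof -
  have "\<forall>i j. integrable M (?E i j)"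
    by (simp add: forall_4 integrable_second_moment)
  then have "integral\<^sup>L M (\<lambda>x. \<chi> i j. ?E i j x) = (\<chi> i j. integral\<^sup>L M (?E i j))"
    by (simp add: integral_vec_lambda integrable_vec_lambda)
  also have "\<dots> = ?rhs"
    by (simp add: vec_eq_iff forall_4 Let_def qmul_qcnj_self qmul_qcnj_self' qmul_qcnj_qcnj
        integral_qcnj square_integrable_z1 square_integrable_z2 integral_qmul_z2_z1
        vanishing_second_moments vanishing_mixed_second_moments)
  finally show ?thesis .
qed

end

theorem mainTheorem5:
  fixes M :: "'a measure" and \<mu>1 \<mu>2 :: quat and z1 z2 q :: "'a \<Rightarrow> quat"
  assumes "prob_space M"
    and "pure_unit \<mu>1" and "pure_unit \<mu>2" and "\<mu>1 \<bullet> \<mu>2 = 0"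
    and "z1 \<in> borel_measurable M" and "z2 \<in> borel_measurable M"
    and "\<And>x. x \<in> space M \<Longrightarrow> z1 x \<in> Cmu \<mu>1 \<and> z2 x \<in> Cmu \<mu>1"
    and "\<And>x. x \<in> space M \<Longrightarrow> q x = z1 x + qmul (z2 x) \<mu>2"
    and "quat_gaussian M q"
    and "integral\<^sup>L M q = 0"
    and "distr M borel q = distr M borel (\<lambda>x. qmul (q x) \<mu>1)"
  shows "(let qC = (\<lambda>x. vector [z1 x, qcnj (z1 x), z2 x, qcnj (z2 x)] :: quat ^ 4);
              \<sigma>2 = (integral\<^sup>L M (\<lambda>x. (norm (z1 x))\<^sup>2)) *\<^sub>R qone;
              \<zeta>2 = (integral\<^sup>L M (\<lambda>x. (norm (z2 x))\<^sup>2)) *\<^sub>R qone;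
              \<omega> = integral\<^sup>L M (\<lambda>x. qmul (z1 x) (z2 x))
          in integral\<^sup>L M (\<lambda>x. (\<chi> i j. qmul (qC x $ i) (qcnj (qC x $ j))) :: quat ^ 4 ^ 4)
             = vector [vector [\<sigma>2, 0, 0, \<omega>],
                       vector [0, \<sigma>2, qcnj \<omega>, 0],
                       vector [0, \<omega>, \<zeta>2, 0],
                       vector [qcnj \<omega>, 0, 0, \<zeta>2]])"
proof -
  have "q \<in> borel_measurable M" and "\<And>u. integrable M (\<lambda>x. (u \<bullet> q x)\<^sup>2)"
    using assms(9) real_gaussian_square_integrable[OF assms(1)] by (auto simp: quat_gaussian_def)
  then interpret proper_quat_decomposition \<mu>1 \<mu>2 M z1 z2 q
    using assms(1-8,11) by (intro proper_quat_decomposition.intro quat_basis.intro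
        proper_quat_decomposition_axioms.intro) auto
  show ?thesis
    using second_moment_matrix by (simp only: Let_def)
qed

end
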